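(* Let $(P,\lambda)$ be a marked poset which is strict and irredundant. For every $p\in P\setminus P^*$, the equation $x_p=0$ defines a facet of the marked chain polytope $\mathcal{C}(P,\lambda)$. Moreover, $0$ is a vertex of $\mathcal{C}(P,\lambda)$.
   Context: A marked poset $(P,\lambda)$ is a finite poset $(P,\preceq)$ together with an induced subposet $P^*\subseteq P$ of marked elements and an order-preserving marking $\lambda:P^*\to\mathbb{R}$; it is always assumed that all minimal and all maximal elements of $P$ lie in $P^*$. It is strict if $\lambda(a)<\lambda(b)$ whenever $a\prec b$ in $P^*$, and irredundant (regular) if for every covering relation $p\prec q$ in $P$ and all $a,b\in P^*$ with $a\preceq q$ and $p\preceq b$, one has $a=b$ or $\lambda(a)<\lambda(b)$. The marked chain polytope $\mathcal{C}(P,\lambda)$ is the set of all $x\in\mathbb{R}_{\ge0}^{P\setminus P^*}$ with $x_{p_1}+\dots+x_{p_k}\le\lambda(b)-\lambda(a)$ for every maximal chain $a\prec p_1\prec\cdots\prec p_k\prec b$ in $P$ with $a,b\in P^*$ and $p_1,\dots,p_k\in P\setminus P^*$. *)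

theory Defs
  imports "HOL-Analysis.Analysis"
begin

text \<open>The finite poset P is the (finite) type 'a with its order; the marked
elements form the set Pstar, the marking is lam (only its values on Pstar matter).\<close>

definition covers :: "'a::order \<Rightarrow> 'a \<Rightarrow> bool" where
  "covers p q \<longleftrightarrow> p < q \<and> \<not> (\<exists>z. p < z \<and> z < q)"

definition marked_poset :: "'a::{finite,order} set \<Rightarrow> ('a \<Rightarrow> real) \<Rightarrow> bool" where
  "marked_poset Pstar lam \<longleftrightarrow>
     (\<forall>p. (\<forall>q. \<not> q < p) \<longrightarrow> p \<in> Pstar) \<and>
     (\<forall>p. (\<forall>q. \<not> p < q) \<longrightarrow> p \<in> Pstar) \<and>
     (\<forall>a\<in>Pstar. \<forall>b\<in>Pstar. a \<le> b \<longrightarrow> lam a \<le> lam b)"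

definition strict_marked :: "'a::{finite,order} set \<Rightarrow> ('a \<Rightarrow> real) \<Rightarrow> bool" where
  "strict_marked Pstar lam \<longleftrightarrow> (\<forall>a\<in>Pstar. \<forall>b\<in>Pstar. a < b \<longrightarrow> lam a < lam b)"

definition irredundant_marked :: "'a::{finite,order} set \<Rightarrow> ('a \<Rightarrow> real) \<Rightarrow> bool" where
  "irredundant_marked Pstar lam \<longleftrightarrow>
     (\<forall>p q. covers p q \<longrightarrow>
        (\<forall>a\<in>Pstar. \<forall>b\<in>Pstar. a \<le> q \<longrightarrow> p \<le> b \<longrightarrow> a = b \<or> lam a < lam b))"

definition marked_max_chain :: "'a::{finite,order} set \<Rightarrow> 'a \<Rightarrow> 'a list \<Rightarrow> 'a \<Rightarrow> bool" where
  "marked_max_chain Pstar a ps b \<longleftrightarrow>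
     a \<in> Pstar \<and> b \<in> Pstar \<and> (\<forall>p\<in>set ps. p \<notin> Pstar) \<and>
     successively covers (a # ps @ [b])"

text \<open>The marked chain polytope, a subset of R^(P - Pstar), embedded into R^P = real^'a
by fixing all marked coordinates to be 0.\<close>
definition marked_chain_polytope :: "'a::{finite,order} set \<Rightarrow> ('a \<Rightarrow> real) \<Rightarrow> (real^('a::{finite,order})) set" where
  "marked_chain_polytope Pstar lam =
     {x. (\<forall>q\<in>Pstar. x $ q = 0) \<and> (\<forall>q. q \<notin> Pstar \<longrightarrow> 0 \<le> x $ q) \<and>
         (\<forall>a ps b. marked_max_chain Pstar a ps b \<longrightarrow>
             sum_list (map (\<lambda>p. x $ p) ps) \<le> lam b - lam a)}"

end

theory Submission
  imports Defs
begin

text \<open>Strictness gives an \<open>\<epsilon> > 0\<close> below every gap \<open>lam b - lam a\<close> of marked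
\<open>a < b\<close>. A maximal chain through unmarked elements visits each element at most
once, so \<open>\<epsilon>\<close> times any unit vector of an unmarked coordinate lies in the polytope.
Together with \<open>0\<close> these points show that the polytope is full-dimensional in
\<open>R^(P - Pstar)\<close>, and all of them except \<open>\<epsilon> e\<^sub>p\<close> lie in the face cut out by the
valid inequality \<open>x\<^sub>p \<ge> 0\<close>, which therefore has codimension one. Finally \<open>0\<close> is
extreme because the polytope lies in the nonnegative orthant.\<close>

lemma aff_dim_coordinate_supported:
  fixes T :: "(real^'n) set"
  assumes "0 \<in> T"
    and "\<forall>x\<in>T. \<forall>i. i \<notin> U \<longrightarrow> x $ i = 0"
    and "\<forall>i\<in>U. \<exists>c. c \<noteq> 0 \<and> c *\<^sub>R axis i 1 \<in> T"
  shows "aff_dim T = int (card U)"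
proof -
  have "dim T \<le> dim {x::real^'n. \<forall>i. i \<notin> U \<longrightarrow> x $ i = 0}"
    using assms(2) by (intro dim_subset) auto
  also have "\<dots> = card U"
    using dim_substandard_cart[where 'a=real, of U] by (simp add: dim_vec_eq)
  finally have upper: "dim T \<le> card U" .
  let ?axes = "(\<lambda>i. axis i (1::real)) ` U"
  have "?axes \<subseteq> span T"
  proof
    fix w assume "w \<in> ?axes"
    then obtain i c where "w = axis i 1" "c \<noteq> 0" "c *\<^sub>R axis i 1 \<in> T"
      using assms(3) by blast
    then show "w \<in> span T"
      using span_mul[OF span_base, of "c *\<^sub>R axis i 1" T "1 / c"] by simp
  qed
  moreover have "independent ?axes"
    by (rule independent_mono[OF independent_Basis]) auto
  ultimately have "card ?axes \<le> dim (span T)"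
    by (rule independent_card_le_dim)
  moreover have "card ?axes = card U"
    by (rule card_image) (auto simp: inj_on_def axis_eq_axis)
  ultimately have "card U \<le> dim T"
    by (simp add: dim_span)
  with upper show ?thesis
    using aff_dim_zero[of T] assms(1) by (simp add: hull_inc)
qed

lemma coordinate_zero_face_of:
  fixes S :: "(real^'n) set"
  assumes "convex S" and "\<forall>x\<in>S. 0 \<le> x $ i"
  shows "{x \<in> S. x $ i = 0} face_of S"
proof -
  have "{x \<in> S. x $ i = 0} = S \<inter> {x. (- axis i 1) \<bullet> x = 0}"
    by (auto simp: inner_axis')
  also have "\<dots> face_of S"
    using assms by (intro face_of_Int_supporting_hyperplane_le) (auto simp: inner_axis')
  finally show ?thesis .
qed

lemma zero_extreme_point_of_nonneg:
  fixes S :: "(real^'n) set"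
  assumes "0 \<in> S" and nonneg: "\<forall>x\<in>S. \<forall>i. 0 \<le> x $ i"
  shows "0 extreme_point_of S"
  unfolding extreme_point_of_def
proof (intro conjI ballI assms(1) notI)
  fix a b assume a: "a \<in> S" and b: "b \<in> S" and "0 \<in> open_segment a b"
  then obtain u where "a \<noteq> b" "0 < u" "u < 1" and zero: "0 = (1 - u) *\<^sub>R a + u *\<^sub>R b"
    by (auto simp: in_segment)
  have "a $ i = 0 \<and> b $ i = 0" for i
  proof -
    have "(1 - u) * a $ i + u * b $ i = 0"
      using arg_cong[OF zero, of "\<lambda>x. x $ i"] by simp
    moreover have "0 \<le> (1 - u) * a $ i" "0 \<le> u * b $ i"
      using nonneg a b \<open>0 < u\<close> \<open>u < 1\<close> by auto
    ultimately show ?thesis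
      using \<open>0 < u\<close> \<open>u < 1\<close> by (simp add: add_nonneg_eq_0_iff)
  qed
  then have "a = b" by (simp add: vec_eq_iff)
  with \<open>a \<noteq> b\<close> show False ..
qed

lemma sorted_wrt_less_imp_distinct:
  "sorted_wrt (<) (xs :: 'a::preorder list) \<Longrightarrow> distinct xs"
  by (induction xs) auto

lemma marked_max_chain_sorted:
  assumes "marked_max_chain Pstar a ps b"
  shows "sorted_wrt (<) (a # ps @ [b])"
proof -
  have "successively covers (a # ps @ [b])"
    using assms by (simp add: marked_max_chain_def)
  then have "successively (<) (a # ps @ [b])"
    by (rule successively_mono) (simp add: covers_def)
  then show ?thesis
    by (simp add: successively_conv_sorted_wrt)
qed

lemma marked_max_chain_less:
  "marked_max_chain Pstar a ps b \<Longrightarrow> a < b"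
  using marked_max_chain_sorted by fastforce

lemma marked_max_chain_distinct:
  "marked_max_chain Pstar a ps b \<Longrightarrow> distinct ps"
  using marked_max_chain_sorted sorted_wrt_less_imp_distinct by fastforce

lemma marked_chain_polytope_marked:
  "x \<in> marked_chain_polytope Pstar lam \<Longrightarrow> q \<in> Pstar \<Longrightarrow> x $ q = 0"
  by (simp add: marked_chain_polytope_def)

lemma marked_chain_polytope_nonneg:
  "x \<in> marked_chain_polytope Pstar lam \<Longrightarrow> 0 \<le> x $ q"
  by (cases "q \<in> Pstar") (auto simp: marked_chain_polytope_def)

lemma convex_marked_chain_polytope: "convex (marked_chain_polytope Pstar lam)"
  unfolding convex_def
proof (intro ballI allI impI)
  fix x y and u v :: real
  assume x: "x \<in> marked_chain_polytope Pstar lam" and y: "y \<in> marked_chain_polytope Pstar lam"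
    and uv: "0 \<le> u" "0 \<le> v" "u + v = 1"
  show "u *\<^sub>R x + v *\<^sub>R y \<in> marked_chain_polytope Pstar lam"
    unfolding marked_chain_polytope_def
  proof (intro CollectI conjI allI ballI impI)
    fix q
    show "q \<in> Pstar \<Longrightarrow> (u *\<^sub>R x + v *\<^sub>R y) $ q = 0"
      using x y by (simp add: marked_chain_polytope_marked)
    show "0 \<le> (u *\<^sub>R x + v *\<^sub>R y) $ q"
      using x y uv by (simp add: marked_chain_polytope_nonneg)
  next
    fix a ps b assume "marked_max_chain Pstar a ps b"
    then have "sum_list (map (($) x) ps) \<le> lam b - lam a"
      and "sum_list (map (($) y) ps) \<le> lam b - lam a"
      using x y by (auto simp: marked_chain_polytope_def)
    then have "u * sum_list (map (($) x) ps) + v * sum_list (map (($) y) ps)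
        \<le> u * (lam b - lam a) + v * (lam b - lam a)"
      using uv by (intro add_mono mult_left_mono)
    also have "\<dots> = lam b - lam a"
      using uv(3) by (metis distrib_right mult_1)
    finally show "sum_list (map (\<lambda>p. (u *\<^sub>R x + v *\<^sub>R y) $ p) ps) \<le> lam b - lam a"
      by (simp add: sum_list_addf sum_list_const_mult)
  qed
qed

lemma zero_in_marked_chain_polytope:
  assumes "marked_poset Pstar lam"
  shows "0 \<in> marked_chain_polytope Pstar lam"
  unfolding marked_chain_polytope_def
proof (intro CollectI conjI allI ballI impI)
  fix a ps b assume chain: "marked_max_chain Pstar a ps b"
  then have "lam a \<le> lam b"
    using assms marked_max_chain_less[OF chain]
    by (simp add: marked_poset_def marked_max_chain_def order.strict_implies_order)
  then show "sum_list (map (\<lambda>p. 0 $ p) ps) \<le> lam b - lam a"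
    by simp
qed auto

lemma strict_marked_gap:
  assumes "strict_marked Pstar lam"
  obtains \<epsilon> :: real where "\<epsilon> > 0" "\<forall>a\<in>Pstar. \<forall>b\<in>Pstar. a < b \<longrightarrow> \<epsilon> \<le> lam b - lam a"
proof
  define gaps where "gaps = (\<lambda>(a, b). lam b - lam a) ` {(a, b). a \<in> Pstar \<and> b \<in> Pstar \<and> a < b}"
  have "finite gaps" and "\<forall>g\<in>gaps. g > 0"
    using assms by (auto simp: gaps_def strict_marked_def)
  then show "Min (insert 1 gaps) > 0"
    by simp
  show "\<forall>a\<in>Pstar. \<forall>b\<in>Pstar. a < b \<longrightarrow> Min (insert 1 gaps) \<le> lam b - lam a"
  proof (intro ballI impI)
    fix a b assume "a \<in> Pstar" "b \<in> Pstar" "a < b"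
    then have "lam b - lam a \<in> insert 1 gaps"
      by (auto simp: gaps_def)
    then show "Min (insert 1 gaps) \<le> lam b - lam a"
      using \<open>finite gaps\<close> by simp
  qed
qed

lemma scaled_axis_in_marked_chain_polytope:
  assumes gap: "\<forall>a\<in>Pstar. \<forall>b\<in>Pstar. a < b \<longrightarrow> \<epsilon> \<le> lam b - lam a"
    and "0 \<le> \<epsilon>" and "q \<notin> Pstar"
  shows "\<epsilon> *\<^sub>R axis q 1 \<in> marked_chain_polytope Pstar lam"
  unfolding marked_chain_polytope_def
proof (intro CollectI conjI allI ballI impI)
  fix a ps b assume chain: "marked_max_chain Pstar a ps b"
  then have "\<epsilon> \<le> lam b - lam a"
    using gap marked_max_chain_less[OF chain] by (simp add: marked_max_chain_def)
  have "sum_list (map (\<lambda>p. (\<epsilon> *\<^sub>R axis q (1::real)) $ p) ps)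
      = (\<Sum>p\<in>set ps. (\<epsilon> *\<^sub>R axis q 1) $ p)"
    using marked_max_chain_distinct[OF chain] by (simp add: sum_list_distinct_conv_sum_set)
  also have "\<dots> = (\<Sum>p\<in>set ps. if q = p then \<epsilon> else 0)"
    by (rule sum.cong) (auto simp: axis_def)
  also have "\<dots> \<le> lam b - lam a"
    using \<open>\<epsilon> \<le> lam b - lam a\<close> \<open>0 \<le> \<epsilon>\<close> by (simp add: sum.delta)
  finally show "sum_list (map (\<lambda>p. (\<epsilon> *\<^sub>R axis q 1) $ p) ps) \<le> lam b - lam a" .
qed (use assms in \<open>auto simp: axis_def\<close>)

lemma marked_chain_polytope_scaled_axes:
  assumes "strict_marked Pstar lam"
  obtains \<epsilon> :: real
  where "\<epsilon> > 0" "\<And>q. q \<notin> Pstar \<Longrightarrow> \<epsilon> *\<^sub>R axis q 1 \<in> marked_chain_polytope Pstar lam"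
  using strict_marked_gap[OF assms] scaled_axis_in_marked_chain_polytope less_imp_le by metis

lemma aff_dim_marked_chain_polytope:
  assumes "marked_poset Pstar lam" and "strict_marked Pstar lam"
  shows "aff_dim (marked_chain_polytope Pstar lam) = int (card (- Pstar))"
proof -
  obtain \<epsilon> :: real where "\<epsilon> > 0"
    and "\<And>q. q \<notin> Pstar \<Longrightarrow> \<epsilon> *\<^sub>R axis q 1 \<in> marked_chain_polytope Pstar lam"
    using marked_chain_polytope_scaled_axes[OF assms(2)] by blast
  then show ?thesis
    using zero_in_marked_chain_polytope[OF assms(1)]
    by (intro aff_dim_coordinate_supported)
      (auto simp: marked_chain_polytope_marked intro!: exI[of _ \<epsilon>])
qed

lemma coordinate_facet_of_marked_chain_polytope:
  assumes "marked_poset Pstar lam" and "strict_marked Pstar lam" and "p \<notin> Pstar"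
  shows "{x \<in> marked_chain_polytope Pstar lam. x $ p = 0} facet_of marked_chain_polytope Pstar lam"
proof -
  define S where "S = marked_chain_polytope Pstar lam"
  define F where "F = {x \<in> S. x $ p = 0}"
  obtain \<epsilon> :: real where "\<epsilon> > 0" and "\<And>q. q \<notin> Pstar \<Longrightarrow> \<epsilon> *\<^sub>R axis q 1 \<in> S"
    using marked_chain_polytope_scaled_axes[OF assms(2)] unfolding S_def by blast
  then have "aff_dim F = int (card (- Pstar - {p}))"
    using zero_in_marked_chain_polytope[OF assms(1)]
    by (intro aff_dim_coordinate_supported)
      (auto simp: F_def S_def marked_chain_polytope_marked axis_def intro!: exI[of _ \<epsilon>])
  also have "\<dots> = aff_dim S - 1"
    using assms aff_dim_marked_chain_polytope card_gt_0_iff[of "- Pstar"]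
    by (fastforce simp: S_def)
  finally have "aff_dim F = aff_dim S - 1" .
  moreover have "F face_of S"
    unfolding F_def S_def
    by (intro coordinate_zero_face_of convex_marked_chain_polytope ballI marked_chain_polytope_nonneg)
  moreover have "F \<noteq> {}"
    using zero_in_marked_chain_polytope[OF assms(1)] by (auto simp: F_def S_def)
  ultimately show ?thesis
    by (simp add: facet_of_def F_def S_def)
qed

theorem lemma4p3:
  fixes Pstar :: "'a::{finite,order} set" and lam :: "'a \<Rightarrow> real"
  assumes "marked_poset Pstar lam"
    and "strict_marked Pstar lam"
    and "irredundant_marked Pstar lam"
  shows "(\<forall>p. p \<notin> Pstar \<longrightarrow>
            {x \<in> marked_chain_polytope Pstar lam. x $ p = 0} facet_of marked_chain_polytope Pstar lam)
         \<and> 0 extreme_point_of marked_chain_polytope Pstar lam"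
  using coordinate_facet_of_marked_chain_polytope[OF assms(1,2)]
    zero_extreme_point_of_nonneg[OF zero_in_marked_chain_polytope[OF assms(1)]]
    marked_chain_polytope_nonneg
  by blast

end
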